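(* For any signature $\Sigma$, $r_{A_l(\Sigma)}=\pi_l\circ r_{A_p(\Sigma)}$ as maps $\mathbf N(T(\Sigma))\to\mathbb K\langle A_l(\Sigma)\rangle$.
   Context: $\mathbb K$ is a field of characteristic zero; $[P]$ is $1$ if $P$ holds, $0$ otherwise. A signature is a set $\Sigma$ with arity map $|\cdot|:\Sigma\to\mathbb N$. A $\Sigma$-term is the leaf $\bot$ or $s(t_1,\dots,t_n)$ with $s$ of arity $n$, $t_i$ terms; degree = number of internal nodes. A $\Sigma$-forest is a finite word of terms; reduced if no term is $\bot$. $\mathbf N(T(\Sigma))$ is the vector space with basis $E_f$, $f$ reduced forests. Internal nodes of a forest $f$ are numbered $1,\dots,\deg f$ by left-to-right preorder; $d_f(i)$ decoration; $i\to^f_j i'$ means $i'$ is the $j$-th child of $i$; roots are the roots of terms. A $\Sigma$-forest-like alphabet is a set $A$ with arbitrary subset $R^A$, subsets $D^A_s$ ($s\in\Sigma$), binary relations $\to^A_j$ ($j\ge1$). $\mathbb K\langle A\rangle$: noncommutative polynomials, possibly infinite support, bounded degree. $w\in A^*$ is $A$-compatible with $f$ if it has length $\deg f$, $w(i)\in R^A$ for roots $i$, $w(i)\in D^A_{d_f(i)}$ for all $i$, and $i\to^f_j i'\Rightarrow w(i)\to^A_j w(i')$; $r_A(E_f)=\sum_{w\in A^*}[w\ A\text{-compatible with }f]\,w$. $A_p(\Sigma)=\{a^s_u:s\in\Sigma,u\in\mathbb N^*\}$ with root relation $\{a^s_{0^\ell}:\ell\in\mathbb N\}$, $D_s=\{a^s_u:u\in\mathbb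 N^*\}$, $a^s_u\to_j a^{s'}_v$ iff $v=u\,j\,0^\ell$ for some $\ell\in\mathbb N$. $A_l(\Sigma)=\{a^s_\ell:s\in\Sigma,\ell\in\mathbb N\}$ with root relation all of $A_l(\Sigma)$, $D_s=\{a^s_\ell:\ell\in\mathbb N\}$, and $a^s_\ell\to_j a^{s'}_{\ell'}$ iff $\ell<\ell'$ (for every $j\ge1$). $\pi_l:\mathbb K\langle A_p(\Sigma)\rangle\to\mathbb K\langle A_l(\Sigma)\rangle$ is the linear map sending a word $a^{s_1}_{u_1}\cdots a^{s_n}_{u_n}$ to $a^{s_1}_{|u_1|}\cdots a^{s_n}_{|u_n|}$, where $|u|$ is the length of $u$. *)

theory Defs
  imports Main
begin

datatype 's sterm = Bot | Node 's "'s sterm list"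

fun wf_term :: "'s set \<Rightarrow> ('s \<Rightarrow> nat) \<Rightarrow> 's sterm \<Rightarrow> bool" where
  "wf_term Sig ar Bot = True"
| "wf_term Sig ar (Node s ts) = (s \<in> Sig \<and> length ts = ar s \<and> (\<forall>t\<in>set ts. wf_term Sig ar t))"

type_synonym 's forest = "'s sterm list"

definition wf_forest :: "'s set \<Rightarrow> ('s \<Rightarrow> nat) \<Rightarrow> 's forest \<Rightarrow> bool" where
  "wf_forest Sig ar f = (\<forall>t\<in>set f. wf_term Sig ar t)"

definition reduced :: "'s forest \<Rightarrow> bool" where
  "reduced f = (Bot \<notin> set f)"

text \<open>Positions of internal nodes of a term in left-to-right preorder, as paths;
  children are numbered from 1.\<close>

function ipos :: "'s sterm \<Rightarrow> nat list list" where
  "ipos Bot = []"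
| "ipos (Node s ts) = [] # concat (map (\<lambda>(i, t). map ((#) (Suc i)) (ipos t)) (zip [0..<length ts] ts))"
  by pat_completeness auto
termination
  by (relation "measure size") (auto dest!: set_zip_rightD simp: less_Suc_eq_le size_list_estimation')

text \<open>Positions in a forest: first entry is the index (from 0) of the term in the word.\<close>

definition fpos :: "'s forest \<Rightarrow> nat list list" where
  "fpos f = concat (map (\<lambda>k. map ((#) k) (ipos (f ! k))) [0..<length f])"

definition deg :: "'s forest \<Rightarrow> nat" where
  "deg f = length (fpos f)"

fun label_at :: "'s sterm \<Rightarrow> nat list \<Rightarrow> 's" where
  "label_at (Node s ts) [] = s"
| "label_at (Node s ts) (j # p) = (if 1 \<le> j \<and> j \<le> length ts then label_at (ts ! (j - 1)) p else undefined)"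
| "label_at Bot p = undefined"

text \<open>Decoration d_f(i) of the i-th internal node (i counted from 0 here).\<close>
definition deco :: "'s forest \<Rightarrow> nat \<Rightarrow> 's" where
  "deco f i = label_at (f ! hd (fpos f ! i)) (tl (fpos f ! i))"

definition is_root :: "'s forest \<Rightarrow> nat \<Rightarrow> bool" where
  "is_root f i = (length (fpos f ! i) = 1)"

definition child :: "'s forest \<Rightarrow> nat \<Rightarrow> nat \<Rightarrow> nat \<Rightarrow> bool" where
  "child f j i i' = (i < deg f \<and> i' < deg f \<and> fpos f ! i' = fpos f ! i @ [j])"

text \<open>An alphabet is given by R (root set), D (decoration sets D_s) and
  E (E j a b means a \<rightarrow>_j b). Noncommutative polynomials in K<A> are
  coefficient functions on words, 'a list \<Rightarrow> 'k.\<close>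

definition compatible ::
  "'a set \<Rightarrow> ('s \<Rightarrow> 'a set) \<Rightarrow> (nat \<Rightarrow> 'a \<Rightarrow> 'a \<Rightarrow> bool) \<Rightarrow> 'a list \<Rightarrow> 's forest \<Rightarrow> bool" where
  "compatible R D E w f =
     (length w = deg f
      \<and> (\<forall>i<deg f. is_root f i \<longrightarrow> w ! i \<in> R)
      \<and> (\<forall>i<deg f. w ! i \<in> D (deco f i))
      \<and> (\<forall>i i' j. j \<ge> 1 \<longrightarrow> child f j i i' \<longrightarrow> E j (w ! i) (w ! i')))"

definition rA ::
  "'a set \<Rightarrow> ('s \<Rightarrow> 'a set) \<Rightarrow> (nat \<Rightarrow> 'a \<Rightarrow> 'a \<Rightarrow> bool) \<Rightarrow> 's forest \<Rightarrow> 'a list \<Rightarrow> 'k::field_char_0" where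
  "rA R D E f = (\<lambda>w. if compatible R D E w f then 1 else 0)"

text \<open>Elements of N(T(Sigma)): finitely supported coefficient functions on
  well-formed reduced forests; r_A is extended linearly.\<close>

definition inN :: "'s set \<Rightarrow> ('s \<Rightarrow> nat) \<Rightarrow> ('s forest \<Rightarrow> 'k::field_char_0) \<Rightarrow> bool" where
  "inN Sig ar x = (finite {f. x f \<noteq> 0} \<and> (\<forall>f. x f \<noteq> 0 \<longrightarrow> wf_forest Sig ar f \<and> reduced f))"

definition rA_lin ::
  "'a set \<Rightarrow> ('s \<Rightarrow> 'a set) \<Rightarrow> (nat \<Rightarrow> 'a \<Rightarrow> 'a \<Rightarrow> bool) \<Rightarrow> ('s forest \<Rightarrow> 'k::field_char_0) \<Rightarrow> 'a list \<Rightarrow> 'k" where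
  "rA_lin R D E x = (\<lambda>w. \<Sum>f\<in>{f. x f \<noteq> 0}. x f * rA R D E f w)"

definition Ap_R :: "'s set \<Rightarrow> ('s \<times> nat list) set" where
  "Ap_R Sig = {(s, replicate l 0) | s l. s \<in> Sig}"
definition Ap_D :: "'s \<Rightarrow> ('s \<times> nat list) set" where
  "Ap_D s = {(s, u) | u. True}"
definition Ap_E :: "nat \<Rightarrow> ('s \<times> nat list) \<Rightarrow> ('s \<times> nat list) \<Rightarrow> bool" where
  "Ap_E j a b = (\<exists>l. snd b = snd a @ [j] @ replicate l 0)"

definition Al_R :: "'s set \<Rightarrow> ('s \<times> nat) set" where
  "Al_R Sig = Sig \<times> UNIV"
definition Al_D :: "'s \<Rightarrow> ('s \<times> nat) set" where
  "Al_D s = {(s, l) | l. True}"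
definition Al_E :: "nat \<Rightarrow> ('s \<times> nat) \<Rightarrow> ('s \<times> nat) \<Rightarrow> bool" where
  "Al_E j a b = (snd a < snd b)"

definition pi_word :: "('s \<times> nat list) list \<Rightarrow> ('s \<times> nat) list" where
  "pi_word w = map (\<lambda>(s, u). (s, length u)) w"

text \<open>Linear map pi_l: coefficient of v is the sum of the coefficients of all
  words mapped to v (a finite sum wherever pi_l is meaningful).\<close>
definition pi_l :: "(('s \<times> nat list) list \<Rightarrow> 'k::field_char_0) \<Rightarrow> ('s \<times> nat) list \<Rightarrow> 'k" where
  "pi_l P = (\<lambda>v. \<Sum>w\<in>{w. pi_word w = v \<and> P w \<noteq> 0}. P w)"

end

theory Submission
  imports Defs
begin

text \<open>Dropping the index words u from the letters of A_p(\<Sigma>) and keeping only their lengths is a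
  bijection from the A_p-compatible words of a forest onto its A_l-compatible words. Along an edge
  the index of the child extends the index of its parent by one digit j followed by zeros, so its
  length strictly increases; conversely, indices are recovered top-down from the lengths, since a
  root index is a block of zeros and the child index is forced once its length is known. Hence
  r_{A_p}(E_f) has exactly one word in each fibre of \<pi>_l over an A_l-compatible word and none over
  the others, and the identity extends to N(T(\<Sigma>)) by linearity.\<close>

lemma distinct_concat_map_Cons:
  assumes "distinct ks" "inj_on c (set ks)" "\<And>k. k \<in> set ks \<Longrightarrow> distinct (g k)"
  shows "distinct (concat (map (\<lambda>k. map ((#) (c k)) (g k)) ks))"
  using assms
proof (induction ks)
  case (Cons a ks)
  then have "inj_on c (set ks)" "c a \<notin> c ` set ks" by (auto simp: inj_on_def)
  with Cons show ?case by (auto simp: distinct_map)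
qed simp

lemma ipos_Node_nth:
  "ipos (Node s ts) = [] # concat (map (\<lambda>i. map ((#) (Suc i)) (ipos (ts ! i))) [0..<length ts])"
proof -
  have "map (\<lambda>(i, t). map ((#) (Suc i)) (ipos t)) (zip [0..<length ts] ts)
      = map (\<lambda>i. map ((#) (Suc i)) (ipos (ts ! i))) [0..<length ts]"
    by (rule nth_equalityI) auto
  then show ?thesis by simp
qed

lemma in_set_zip_upt_nth: "i < length ts \<Longrightarrow> (i, ts ! i) \<in> set (zip [0..<length ts] ts)"
  by (auto simp: set_zip intro!: exI[of _ i])

lemma distinct_ipos: "distinct (ipos t)"
proof (induction t rule: ipos.induct)
  case (2 s ts)
  have "distinct (concat (map (\<lambda>i. map ((#) (Suc i)) (ipos (ts ! i))) [0..<length ts]))"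
    by (rule distinct_concat_map_Cons) (auto intro: 2 in_set_zip_upt_nth)
  then show ?case by (auto simp add: ipos_Node_nth simp del: ipos.simps)
qed simp

lemma ipos_snoc_closed: "q @ [j] \<in> set (ipos t) \<Longrightarrow> q \<in> set (ipos t) \<and> 1 \<le> j"
proof (induction t arbitrary: q rule: ipos.induct)
  case (2 s ts)
  then obtain i p where i: "i < length ts" "q @ [j] = Suc i # p" "p \<in> set (ipos (ts ! i))"
    by (auto simp add: ipos_Node_nth simp del: ipos.simps)
  show ?case
  proof (cases q)
    case (Cons a q')
    with i have "q' \<in> set (ipos (ts ! i)) \<and> 1 \<le> j"
      using 2(1)[OF in_set_zip_upt_nth[OF i(1)]] by auto
    with Cons i show ?thesis by (auto simp add: ipos_Node_nth simp del: ipos.simps)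
  qed (use i in simp)
qed simp

lemma in_set_fpos_iff:
  "p \<in> set (fpos f) \<longleftrightarrow> (\<exists>k q. k < length f \<and> p = k # q \<and> q \<in> set (ipos (f ! k)))"
  by (auto simp: fpos_def)

lemma distinct_fpos: "distinct (fpos f)"
  unfolding fpos_def by (rule distinct_concat_map_Cons) (auto simp: distinct_ipos)

lemma fpos_nth_neq_Nil: "i < deg f \<Longrightarrow> fpos f ! i \<noteq> []"
  using nth_mem[of i "fpos f"] by (auto simp: deg_def in_set_fpos_iff)

lemma fpos_snoc_closed:
  "q @ [j] \<in> set (fpos f) \<Longrightarrow> q \<noteq> [] \<Longrightarrow> q \<in> set (fpos f) \<and> 1 \<le> j"
  using ipos_snoc_closed[of "tl q" j] by (cases q) (auto simp: in_set_fpos_iff)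

lemma fpos_parent:
  assumes "i < deg f" "\<not> is_root f i"
  obtains i0 j where "child f j i0 i" "1 \<le> j"
proof -
  let ?p = "fpos f ! i"
  have "?p \<noteq> []" "length ?p \<noteq> 1" using assms by (auto simp: fpos_nth_neq_Nil is_root_def)
  then obtain q j where p: "?p = q @ [j]" "q \<noteq> []" by (cases ?p rule: rev_cases) auto
  moreover have "?p \<in> set (fpos f)" using assms(1) by (simp add: deg_def)
  ultimately have "q \<in> set (fpos f)" "1 \<le> j" using fpos_snoc_closed by metis+
  then obtain i0 where "i0 < deg f" "fpos f ! i0 = q" by (auto simp: deg_def in_set_conv_nth)
  with assms(1) p have "child f j i0 i" by (simp add: child_def)
  then show thesis using \<open>1 \<le> j\<close> by (rule that)
qed

lemma deg_node_induct [consumes 1, case_names root child]: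
  assumes "i < deg f"
    and root: "\<And>i. i < deg f \<Longrightarrow> is_root f i \<Longrightarrow> P i"
    and child: "\<And>i0 i j. child f j i0 i \<Longrightarrow> 1 \<le> j \<Longrightarrow> P i0 \<Longrightarrow> P i"
  shows "P i"
  using assms(1)
proof (induction "length (fpos f ! i)" arbitrary: i rule: less_induct)
  case less
  show ?case
  proof (cases "is_root f i")
    case False
    with less.prems obtain i0 j where ch: "child f j i0 i" "1 \<le> j" by (rule fpos_parent)
    then have "i0 < deg f" "length (fpos f ! i0) < length (fpos f ! i)" by (auto simp: child_def)
    with less.hyps ch show ?thesis by (blast intro: child)
  qed (use less.prems root in blast)
qed

lemma nth_pi_word: "i < length w \<Longrightarrow> pi_word w ! i = (fst (w ! i), length (snd (w ! i)))"
  by (simp add: pi_word_def split: prod.split)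

lemma length_pi_word [simp]: "length (pi_word w) = length w"
  by (simp add: pi_word_def)

lemma compatible_Al_pi_word:
  assumes w: "compatible (Ap_R Sig) Ap_D Ap_E w f"
  shows "compatible (Al_R Sig) Al_D Al_E (pi_word w) f"
proof -
  have len: "length w = deg f" using w by (simp add: compatible_def)
  show ?thesis unfolding compatible_def
  proof (intro conjI allI impI)
    fix i i' j assume "1 \<le> j" "child f j i i'"
    with w len show "Al_E j (pi_word w ! i) (pi_word w ! i')"
      by (force simp: compatible_def child_def Ap_E_def Al_E_def nth_pi_word)
  qed (use w len in \<open>auto simp: compatible_def Ap_R_def Al_R_def Ap_D_def Al_D_def nth_pi_word\<close>)
qed

lemma inj_on_pi_word_compatible_Ap: "inj_on pi_word {w. compatible (Ap_R Sig) Ap_D Ap_E w f}"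
proof (rule inj_onI, clarsimp)
  fix w w'
  assume w: "compatible (Ap_R Sig) Ap_D Ap_E w f" and w': "compatible (Ap_R Sig) Ap_D Ap_E w' f"
    and eq: "pi_word w = pi_word w'"
  have len: "length w = deg f" "length w' = deg f" using w w' by (auto simp: compatible_def)
  have fst_eq: "fst (w ! i) = fst (w' ! i)"
    and length_eq: "length (snd (w ! i)) = length (snd (w' ! i))" if "i < deg f" for i
    using arg_cong[OF eq, of "\<lambda>v. v ! i"] that len by (simp_all add: nth_pi_word)
  have "snd (w ! i) = snd (w' ! i)" if "i < deg f" for i
    using that
  proof (induction rule: deg_node_induct)
    case (root i)
    with w w' have "w ! i \<in> Ap_R Sig" "w' ! i \<in> Ap_R Sig" by (auto simp: compatible_def)
    with length_eq[OF root(1)] show ?case by (auto simp: Ap_R_def)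
  next
    case (child i0 i j)
    obtain l l' where "snd (w ! i) = snd (w ! i0) @ [j] @ replicate l 0"
      and "snd (w' ! i) = snd (w' ! i0) @ [j] @ replicate l' 0"
      using w w' child(1,2) unfolding compatible_def Ap_E_def by blast
    with child(3) length_eq[of i] child(1) show ?case by (auto simp: child_def)
  qed
  with len fst_eq show "w = w'" by (auto intro!: nth_equalityI prod_eqI)
qed

text \<open>The A_p index of the letter at position p, when the A_l letters have levels L: the index of
  the parent, then the child number, then zeros up to length L p (the truncated subtraction is
  exact on compatible words, where levels strictly increase along edges).\<close>

function ap_index :: "(nat list \<Rightarrow> nat) \<Rightarrow> nat list \<Rightarrow> nat list" where
  "ap_index L p = (if length p \<le> 1 then replicate (L p) 0
     else ap_index L (butlast p) @ [last p] @ replicate (L p - L (butlast p) - 1) 0)"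
  by pat_completeness auto
termination by (relation "measure (\<lambda>(L, p). length p)") auto

declare ap_index.simps [simp del]

lemma ap_index_snoc:
  "q \<noteq> [] \<Longrightarrow> ap_index L (q @ [j]) = ap_index L q @ [j] @ replicate (L (q @ [j]) - L q - 1) 0"
  by (simp add: ap_index.simps[of L "q @ [j]"])

lemma compatible_Al_imp_pi_word:
  assumes v: "compatible (Al_R Sig) Al_D Al_E v f"
  obtains w where "compatible (Ap_R Sig) Ap_D Ap_E w f" "pi_word w = v"
proof -
  define P where "P = fpos f"
  have len: "length v = length P" using v by (simp add: compatible_def P_def deg_def)
  define L where "L p = the (map_of (zip P (map snd v)) p)" for p
  have L: "L (P ! i) = snd (v ! i)" if "i < length P" for i
    using map_of_zip_nth[of P "map snd v" i] that len by (simp add: L_def P_def distinct_fpos)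
  define w where "w = map (\<lambda>i. (fst (v ! i), ap_index L (P ! i))) [0..<length P]"
  have length_ap_index: "length (ap_index L (P ! i)) = L (P ! i)" if "i < deg f" for i
    using that
  proof (induction rule: deg_node_induct)
    case (root i)
    then show ?case by (simp add: ap_index.simps is_root_def P_def)
  next
    case (child i0 i j)
    then have i: "i0 < length P" "i < length P" "P ! i = P ! i0 @ [j]" "P ! i0 \<noteq> []"
      by (auto simp: child_def P_def deg_def fpos_nth_neq_Nil)
    have "snd (v ! i0) < snd (v ! i)" using v child(1,2) by (auto simp: compatible_def Al_E_def)
    with child(3) L[OF i(1)] L[OF i(2)] i(3,4) show ?case by (simp add: ap_index_snoc)
  qed
  have "compatible (Ap_R Sig) Ap_D Ap_E w f"
    unfolding compatible_def
  proof (intro conjI allI impI)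
    fix i assume "i < deg f" "is_root f i"
    with v show "w ! i \<in> Ap_R Sig"
      by (auto simp: w_def P_def deg_def is_root_def Ap_R_def Al_R_def compatible_def ap_index.simps)
  next
    fix i i' j assume "1 \<le> j" "child f j i i'"
    then show "Ap_E j (w ! i) (w ! i')"
      by (auto simp: w_def P_def deg_def child_def Ap_E_def ap_index_snoc fpos_nth_neq_Nil)
  qed (use v in \<open>auto simp: w_def P_def deg_def Ap_D_def Al_D_def compatible_def\<close>)
  moreover have "pi_word w = v"
    using len length_ap_index L by (auto simp: w_def pi_word_def P_def deg_def intro!: nth_equalityI)
  ultimately show thesis by (rule that)
qed

lemma bij_betw_pi_word_compatible:
  "bij_betw pi_word {w. compatible (Ap_R Sig) Ap_D Ap_E w f}
     {v. compatible (Al_R Sig) Al_D Al_E v f}"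
  unfolding bij_betw_def
  by (auto simp: inj_on_pi_word_compatible_Ap compatible_Al_pi_word
      elim!: compatible_Al_imp_pi_word)

lemma pi_l_rA_lin_eq_if_bij_betw:
  fixes x :: "'s forest \<Rightarrow> 'k::field_char_0"
  assumes fin: "finite {f. x f \<noteq> 0}"
    and bij: "\<And>f. bij_betw pi_word {w. compatible R D E w f} {v. compatible R' D' E' v f}"
  shows "pi_l (rA_lin R D E x) = rA_lin R' D' E' x"
proof
  fix v
  define S where "S = {f. x f \<noteq> 0}"
  define Q where "Q = rA_lin R D E x"
  define F where "F f = {w. compatible R D E w f \<and> pi_word w = v}" for f
  have bij_F: "bij_betw pi_word (F f) {v' \<in> {v}. compatible R' D' E' v' f}" for f
  proof (rule bij_betw_subset[OF bij])
    have "pi_word ` {w. compatible R D E w f} = {v. compatible R' D' E' v f}"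
      using bij by (rule bij_betw_imp_surj_on)
    then show "pi_word ` F f = {v' \<in> {v}. compatible R' D' E' v' f}"
      unfolding F_def by (auto simp: image_iff) (metis (mono_tags, lifting) imageE mem_Collect_eq)
  qed (auto simp: F_def)
  have card_F: "card (F f) = card {v' \<in> {v}. compatible R' D' E' v' f}" for f
    using bij_F by (rule bij_betw_same_card)
  have fin_F: "finite (F f)" for f
    using bij_betw_finite[OF bij_F] by simp
  define T where "T = (\<Union>f\<in>S. F f)"
  have fin_T: "finite T" using fin fin_F by (simp add: T_def S_def)
  have Q_eq: "Q w = (\<Sum>f\<in>S. x f * rA R D E f w)" for w
    by (simp add: Q_def rA_lin_def S_def)
  have "{w. pi_word w = v \<and> Q w \<noteq> 0} \<subseteq> T"
  proof
    fix w assume "w \<in> {w. pi_word w = v \<and> Q w \<noteq> 0}"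
    then have "Q w \<noteq> 0" "pi_word w = v" by auto
    then obtain f where "f \<in> S" "rA R D E f w \<noteq> (0::'k)"
      using Q_eq by (metis (no_types, lifting) mult_zero_right sum.neutral)
    with \<open>pi_word w = v\<close> show "w \<in> T" by (auto simp: T_def F_def rA_def split: if_splits)
  qed
  then have "pi_l Q v = (\<Sum>w\<in>T. Q w)"
    unfolding pi_l_def by (rule sum.mono_neutral_left[OF fin_T]) (auto simp: T_def F_def)
  also have "\<dots> = (\<Sum>f\<in>S. x f * (\<Sum>w\<in>T. rA R D E f w))"
    by (simp add: Q_eq sum.swap[of _ T] sum_distrib_left)
  also have "\<dots> = (\<Sum>f\<in>S. x f * of_nat (card (F f)))"
  proof (rule sum.cong[OF refl])
    fix f assume "f \<in> S"
    then have "{w \<in> T. compatible R D E w f} = F f" by (auto simp: T_def F_def)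
    then show "x f * (\<Sum>w\<in>T. rA R D E f w) = x f * of_nat (card (F f))"
      using sum.inter_filter[OF fin_T, of "\<lambda>_. 1 :: 'k" "\<lambda>w. compatible R D E w f"]
      by (simp add: rA_def)
  qed
  also have "\<dots> = rA_lin R' D' E' x v"
    by (auto simp: card_F rA_lin_def rA_def S_def Collect_conv_if intro!: sum.cong)
  finally show "pi_l Q v = rA_lin R' D' E' x v" .
qed

theorem proposition4p10:
  fixes Sig :: "'s set" and ar :: "'s \<Rightarrow> nat" and x :: "'s forest \<Rightarrow> 'k::field_char_0"
  assumes "inN Sig ar x"
  shows "rA_lin (Al_R Sig) Al_D Al_E x = pi_l (rA_lin (Ap_R Sig) Ap_D Ap_E x)"
proof -
  have "finite {f. x f \<noteq> 0}" using assms by (simp add: inN_def)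
  then show ?thesis
    by (rule pi_l_rA_lin_eq_if_bij_betw[OF _ bij_betw_pi_word_compatible, symmetric])
qed

end
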